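(* For every integer $n\ge 4$, $g(n,4) \ge \frac{n(n-3)}{48}$.
   Context: For integers $2\le k\le n$, let $S_n$ denote the set of permutations of $[n]=\{1,\dots,n\}$ (written as sequences), and $S_{n,k}$ the set of all sequences of $k$ distinct elements of $[n]$. A sequence $\kappa\in S_{n,k}$ is a subsequence of a permutation $\pi\in S_n$ if its elements appear in $\pi$ in the same relative order as in $\kappa$. A perfect sequence covering array ${\rm PSCA}(n,k)$ with multiplicity $\lambda$ (a positive integer) is a multiset $X$ of elements of $S_n$ such that every $\kappa\in S_{n,k}$ is a subsequence of exactly $\lambda$ elements of $X$ (counted with multiplicity). $g(n,k)$ denotes the smallest $\lambda$ for which a ${\rm PSCA}(n,k)$ with multiplicity $\lambda$ exists. *)

theory Defs
  imports Complex_Main "HOL-Library.Multiset" "HOL-Library.Sublist"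
begin

definition perms :: "nat \<Rightarrow> nat list set" where
  "perms n = {\<pi>. distinct \<pi> \<and> set \<pi> = {1..n}}"

definition kseqs :: "nat \<Rightarrow> nat \<Rightarrow> nat list set" where
  "kseqs n k = {\<kappa>. distinct \<kappa> \<and> length \<kappa> = k \<and> set \<kappa> \<subseteq> {1..n}}"

definition is_PSCA :: "nat \<Rightarrow> nat \<Rightarrow> nat \<Rightarrow> nat list multiset \<Rightarrow> bool" where
  "is_PSCA n k lam X \<longleftrightarrow>
     set_mset X \<subseteq> perms n \<and>
     (\<forall>\<kappa>\<in>kseqs n k. size (filter_mset (\<lambda>\<pi>. subseq \<kappa> \<pi>) X) = lam)"

definition g :: "nat \<Rightarrow> nat \<Rightarrow> nat" where
  "g n k = (LEAST lam. 0 < lam \<and> (\<exists>X. is_PSCA n k lam X))"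

end

theory Submission
  imports Defs "HOL-Combinatorics.Multiset_Permutations"
begin

text \<open>For an ordered triple \<open>t = (a, b, c)\<close> of distinct points put
  \<open>s\<^sub>t(\<pi>) = [a \<prec> b] + [b \<prec> c] + [c \<prec> a]\<close>, where \<open>[u \<prec> v] = \<plusminus>1\<close> records whether \<open>u\<close>
  precedes \<open>v\<close> in \<open>\<pi>\<close>; this is \<open>\<plusminus>1\<close> for every permutation.  In a PSCA(n,4)
  \<open>\<pi>\<^sub>1, \<dots>, \<pi>\<^sub>N\<close> of multiplicity \<open>\<lambda>\<close> the patterns on any 4-set are equidistributed, so
  \<open>N = 24\<lambda>\<close> and the correlation \<open>C(t,t') = \<Sum>\<^sub>i s\<^sub>t(\<pi>\<^sub>i) s\<^sub>t\<^sub>'(\<pi>\<^sub>i)\<close> is \<open>\<plusminus>N\<close> if \<open>t, t'\<close>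
  span the same set, \<open>\<plusminus>8\<lambda>\<close> if they share two points and \<open>0\<close> otherwise.  The \<open>N \<times> N\<close>
  Gram matrix \<open>H\<^sub>i\<^sub>j = \<Sum>\<^sub>t s\<^sub>t(\<pi>\<^sub>i) s\<^sub>t(\<pi>\<^sub>j)\<close> has constant diagonal \<open>M = n(n-1)(n-2)\<close> and
  Frobenius norm \<open>\<Sum>\<^sub>t\<^sub>,\<^sub>t\<^sub>' C(t,t')\<^sup>2\<close>, whence \<open>N M\<^sup>2 \<le> M (6N\<^sup>2 + 18(n-3) \<cdot> 64\<lambda>\<^sup>2)\<close>,
  i.e. \<open>(n-1)(n-2) \<le> 48\<lambda>\<close>.\<close>

definition pair_sign :: "'a list \<Rightarrow> 'a \<Rightarrow> 'a \<Rightarrow> real" where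
  "pair_sign x u v = (if subseq [u, v] x then 1 else -1)"

definition cyclic_sign :: "'a list \<Rightarrow> 'a \<Rightarrow> 'a \<Rightarrow> 'a \<Rightarrow> real" where
  "cyclic_sign x a b c = pair_sign x a b + pair_sign x b c + pair_sign x c a"

lemma subseq_pair_asym:
  assumes "distinct xs" "u \<in> set xs" "v \<in> set xs" "u \<noteq> v"
  shows "subseq [u, v] xs \<longleftrightarrow> \<not> subseq [v, u] xs"
  using assms
proof (induction xs)
  case (Cons a xs)
  then show ?case by (auto simp: subseq_singleton_left dest: subseq_Cons')
qed simp

lemma subseq_pair_not_cyclic:
  assumes "distinct xs"
  shows "\<not> (subseq [a, b] xs \<and> subseq [b, c] xs \<and> subseq [c, a] xs)"
  using assms
proof (induction xs)
  case (Cons x xs)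
  then show ?case by (auto simp: subseq_singleton_left dest: subseq_Cons')
qed simp

lemma pair_sign_swap:
  assumes "distinct x" "u \<in> set x" "v \<in> set x" "u \<noteq> v"
  shows "pair_sign x v u = - pair_sign x u v"
  using subseq_pair_asym[OF assms] by (simp add: pair_sign_def)

lemma cyclic_sign_rotate: "cyclic_sign x a b c = cyclic_sign x b c a"
  by (simp add: cyclic_sign_def)

lemma cyclic_sign_swap:
  assumes "distinct x" "distinct [a, b, c]" "{a, b, c} \<subseteq> set x"
  shows "cyclic_sign x a c b = - cyclic_sign x a b c"
  using assms pair_sign_swap[of x] by (simp add: cyclic_sign_def)

lemma cyclic_sign_square:
  assumes "distinct x" "distinct [a, b, c]" "{a, b, c} \<subseteq> set x"
  shows "(cyclic_sign x a b c)^2 = 1"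
  using assms subseq_pair_not_cyclic[of x a b c] subseq_pair_not_cyclic[of x a c b]
    subseq_pair_asym[of x] by (auto simp: cyclic_sign_def pair_sign_def)

lemma pair_sign_filter:
  assumes "P u" "P v"
  shows "pair_sign (filter P x) u v = pair_sign x u v"
proof -
  have "subseq [u, v] (filter P x) \<longleftrightarrow> subseq [u, v] x"
    using subseq_filter[of "[u, v]" x P] assms
    by (auto intro: subseq_order.order_trans[OF _ subseq_filter_left])
  then show ?thesis by (simp add: pair_sign_def)
qed

lemma cyclic_sign_filter:
  assumes "P a" "P b" "P c"
  shows "cyclic_sign (filter P x) a b c = cyclic_sign x a b c"
  using assms by (simp add: cyclic_sign_def pair_sign_filter)

lemma subseq_iff_filter_eq:
  assumes "distinct x" "distinct \<kappa>" "set \<kappa> \<subseteq> set x"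
  shows "subseq \<kappa> x \<longleftrightarrow> filter (\<lambda>v. v \<in> set \<kappa>) x = \<kappa>"
proof
  assume "subseq \<kappa> x"
  then have "subseq \<kappa> (filter (\<lambda>v. v \<in> set \<kappa>) x)"
    using subseq_filter[of \<kappa> x "\<lambda>v. v \<in> set \<kappa>"] by (simp add: filter_id_conv)
  moreover have "length (filter (\<lambda>v. v \<in> set \<kappa>) x) = length \<kappa>"
    using assms distinct_card[of \<kappa>] distinct_card[of "filter (\<lambda>v. v \<in> set \<kappa>) x"]
    by (metis distinct_filter inf.absorb_iff2 set_filter Int_def)
  ultimately show "filter (\<lambda>v. v \<in> set \<kappa>) x = \<kappa>"
    by (metis subseq_same_length)
next
  assume "filter (\<lambda>v. v \<in> set \<kappa>) x = \<kappa>"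
  then show "subseq \<kappa> x" by (metis subseq_filter_left)
qed

lemma distinct_triple_if_same_set:
  "distinct [p, q, r] \<Longrightarrow> {p, q, r} = {a, b, c} \<Longrightarrow> distinct [a, b, c]"
  using distinct_card[of "[p, q, r]"] by (intro card_distinct) simp

lemma cyclic_sign_same_set:
  assumes "distinct [p, q, r]" "{p, q, r} = {a, b, c}"
  obtains \<sigma> :: real where "\<sigma>^2 = 1"
    "\<And>x. distinct x \<Longrightarrow> {a, b, c} \<subseteq> set x \<Longrightarrow> cyclic_sign x p q r = \<sigma> * cyclic_sign x a b c"
proof -
  have abc: "distinct [a, b, c]"
    using distinct_triple_if_same_set[OF assms] .
  have "(\<forall>x. cyclic_sign x p q r = cyclic_sign x a b c) \<or>
        (\<forall>x. cyclic_sign x p q r = cyclic_sign x a c b)"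
  proof -
    have "p \<in> {a, b, c}" "q \<in> {a, b, c}" "r \<in> {a, b, c}"
      using assms(2) by blast+
    then show ?thesis
      using assms(1) abc by (auto simp: cyclic_sign_def add_ac)
  qed
  then show thesis
  proof
    assume "\<forall>x. cyclic_sign x p q r = cyclic_sign x a b c"
    then show thesis by (intro that[of 1]) simp_all
  next
    assume "\<forall>x. cyclic_sign x p q r = cyclic_sign x a c b"
    then show thesis using cyclic_sign_swap[OF _ abc] by (intro that[of "-1"]) simp_all
  qed
qed

lemma sum_permutations_of_set:
  assumes "finite A" "A \<noteq> {}"
  shows "sum F (permutations_of_set A) =
    (\<Sum>a\<in>A. \<Sum>xs\<in>permutations_of_set (A - {a}). F (a # xs))"
proof -
  have "sum F (permutations_of_set A) =
      sum F (\<Union>a\<in>A. (#) a ` permutations_of_set (A - {a}))"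
    using permutations_of_set_nonempty[OF assms(2)] by simp
  also have "\<dots> = (\<Sum>a\<in>A. sum F ((#) a ` permutations_of_set (A - {a})))"
    by (rule sum.UNION_disjoint) (use assms in auto)
  also have "\<dots> = (\<Sum>a\<in>A. \<Sum>xs\<in>permutations_of_set (A - {a}). F (a # xs))"
    by (simp add: sum.reindex)
  finally show ?thesis .
qed

lemma sum_permutations_of_set_2:
  "a \<noteq> b \<Longrightarrow> sum F (permutations_of_set {a, b}) = F [a, b] + F [b, a]"
  by (simp add: permutations_of_set_doubleton)

lemma sum_permutations_of_set_3:
  assumes "distinct [a, b, c]"
  shows "sum F (permutations_of_set {a, b, c}) =
    F [a,b,c] + F [a,c,b] + F [b,a,c] + F [b,c,a] + F [c,a,b] + F [c,b,a]"
proof -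
  have "{a,b,c} - {a} = {b,c}" "{a,b,c} - {b} = {a,c}" "{a,b,c} - {c} = {a,b}"
    using assms by auto
  with assms show ?thesis
    by (subst sum_permutations_of_set) (simp_all add: sum_permutations_of_set_2 add.assoc)
qed

lemma sum_permutations_of_set_4:
  assumes "distinct [a, b, c, d]"
  shows "sum F (permutations_of_set {a, b, c, d}) =
    F [a,b,c,d] + F [a,b,d,c] + F [a,c,b,d] + F [a,c,d,b] + F [a,d,b,c] + F [a,d,c,b] +
    F [b,a,c,d] + F [b,a,d,c] + F [b,c,a,d] + F [b,c,d,a] + F [b,d,a,c] + F [b,d,c,a] +
    F [c,a,b,d] + F [c,a,d,b] + F [c,b,a,d] + F [c,b,d,a] + F [c,d,a,b] + F [c,d,b,a] +
    F [d,a,b,c] + F [d,a,c,b] + F [d,b,a,c] + F [d,b,c,a] + F [d,c,a,b] + F [d,c,b,a]"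
proof -
  have "{a,b,c,d} - {a} = {b,c,d}" "{a,b,c,d} - {b} = {a,c,d}"
    "{a,b,c,d} - {c} = {a,b,d}" "{a,b,c,d} - {d} = {a,b,c}"
    using assms by auto
  with assms show ?thesis
    by (subst sum_permutations_of_set) (simp_all add: sum_permutations_of_set_3 add.assoc)
qed

lemma kseqs_3E:
  assumes "t \<in> kseqs n 3"
  obtains a b c where "t = [a, b, c]" "distinct [a, b, c]" "{a, b, c} \<subseteq> {1..n}"
  using assms unfolding kseqs_def
  by (cases t; cases "tl t"; cases "tl (tl t)") (auto simp: numeral_eq_Suc)

lemma finite_kseqs: "finite (kseqs n k)"
proof (rule finite_subset)
  show "kseqs n k \<subseteq> {xs. set xs \<subseteq> {1..n} \<and> length xs = k}"
    by (auto simp: kseqs_def)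
qed (simp add: finite_lists_length_eq)

lemma card_kseqs_3:
  assumes "3 \<le> n"
  shows "card (kseqs n 3) = n * (n - 1) * (n - 2)"
proof -
  have "kseqs n 3 = {xs. length xs = 3 \<and> distinct xs \<and> set xs \<subseteq> {1..n}}"
    by (auto simp: kseqs_def)
  then have "card (kseqs n 3) = \<Prod>{n - 3 + 1..n}"
    using card_lists_distinct_length_eq[of "{1..n}" 3] assms by simp
  also have "{n - 3 + 1..n} = {n - 2, n - 1, n}"
    using assms by auto
  also have "\<Prod>{n - 2, n - 1, n} = n * (n - 1) * (n - 2)"
  proof -
    have "n - 2 \<notin> {n - 1, n}" "n - 1 \<notin> {n}"
      using assms by auto
    then show ?thesis
      by (simp add: mult_ac)
  qed
  finally show ?thesis .
qed

lemma card_kseqs_same_set: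
  assumes "t \<in> kseqs n 3"
  shows "card {t' \<in> kseqs n 3. set t' = set t} \<le> 6"
proof -
  have "{t' \<in> kseqs n 3. set t' = set t} \<subseteq> permutations_of_set (set t)"
    by (auto simp: kseqs_def permutations_of_set_def)
  moreover have "card (permutations_of_set (set t)) = 6"
    using assms distinct_card[of t] by (simp add: kseqs_def fact_numeral)
  ultimately show ?thesis
    by (metis card_mono finite_permutations_of_set)
qed

lemma kseqs_two_common_split:
  assumes "t \<in> kseqs n 3" "t' \<in> kseqs n 3" "card (set t \<inter> set t') = 2"
  obtains us w vs where "t' = us @ w # vs" "w \<notin> set t" "set us \<union> set vs \<subseteq> set t"
proof -
  have t': "distinct t'" "card (set t') = 3"
    using assms(2) distinct_card[of t'] by (auto simp: kseqs_def)
  have "\<not> set t' \<subseteq> set t"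
  proof
    assume "set t' \<subseteq> set t"
    then have "set t \<inter> set t' = set t'" by blast
    then show False using assms(3) t'(2) by simp
  qed
  then obtain w where w: "w \<in> set t'" "w \<notin> set t"
    by blast
  then obtain us vs where split: "t' = us @ w # vs"
    by (meson split_list)
  have "u \<in> set t" if u: "u \<in> set us \<union> set vs" for u
  proof (rule ccontr)
    assume "u \<notin> set t"
    then have "set t \<inter> set t' \<subseteq> set t' - {u, w}"
      using w by blast
    moreover have "u \<noteq> w" "u \<in> set t'"
      using u t'(1) split by auto
    then have "card (set t' - {u, w}) = 1"
      using w t'(2) by (simp add: card_Diff_subset)
    ultimately show False
      using assms(3) card_mono[of "set t' - {u, w}" "set t \<inter> set t'"] by simp
  qed
  then show thesis
    using that split w(2) by blast
qed

lemma card_kseqs_two_common: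
  assumes t: "t \<in> kseqs n 3"
  shows "card {t' \<in> kseqs n 3. card (set t \<inter> set t') = 2} \<le> 18 * (n - 3)"
proof -
  define W where "W = {1..n} - set t"
  define D where "D = {xs. length xs = 2 \<and> distinct xs \<and> set xs \<subseteq> set t}"
  define ins :: "nat \<times> nat \<times> nat list \<Rightarrow> nat list"
    where "ins = (\<lambda>(i, w, xs). take i xs @ w # drop i xs)"
  have card_t: "card (set t) = 3"
    using t distinct_card[of t] by (simp add: kseqs_def)
  have card_W: "card W = n - 3"
    using t card_t by (auto simp: W_def kseqs_def card_Diff_subset)
  have fin_D: "finite D"
    unfolding D_def by (rule finite_subset[OF _ finite_lists_length_eq[of "set t" 2]]) auto
  have card_D: "card D = 6"
    using card_lists_distinct_length_eq[of "set t" 2] card_t by (simp add: D_def numeral_eq_Suc)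
  have "{t' \<in> kseqs n 3. card (set t \<inter> set t') = 2} \<subseteq> ins ` ({..<3} \<times> W \<times> D)"
  proof
    fix t' assume t': "t' \<in> {t' \<in> kseqs n 3. card (set t \<inter> set t') = 2}"
    then obtain us w vs where split: "t' = us @ w # vs" "w \<notin> set t" "set us \<union> set vs \<subseteq> set t"
      using kseqs_two_common_split[OF t] by blast
    have "(length us, w, us @ vs) \<in> {..<3} \<times> W \<times> D"
      using t' split by (auto simp: W_def D_def kseqs_def)
    moreover have "ins (length us, w, us @ vs) = t'"
      using split by (simp add: ins_def)
    ultimately show "t' \<in> ins ` ({..<3} \<times> W \<times> D)"
      by (metis image_eqI)
  qed
  then have "card {t' \<in> kseqs n 3. card (set t \<inter> set t') = 2} \<le> card (ins ` ({..<3} \<times> W \<times> D))"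
    by (rule card_mono[rotated]) (simp add: W_def fin_D)
  also have "\<dots> \<le> card ({..<3::nat} \<times> W \<times> D)"
    by (rule card_image_le) (simp add: W_def fin_D)
  finally show ?thesis
    using card_W card_D by (simp add: card_cartesian_product)
qed

lemma sum_squared_gram_swap:
  fixes f :: "'a \<Rightarrow> 'b \<Rightarrow> real"
  shows "(\<Sum>i\<in>I. \<Sum>j\<in>I. (\<Sum>t\<in>T. f t i * f t j)^2) =
    (\<Sum>t\<in>T. \<Sum>t'\<in>T. (\<Sum>i\<in>I. f t i * f t' i)^2)"
proof -
  define h where "h i j t t' = f t i * f t' i * (f t j * f t' j)" for i j t t'
  have "(\<Sum>t\<in>T. f t i * f t j)^2 = (\<Sum>t\<in>T. \<Sum>t'\<in>T. h i j t t')" for i j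
    by (simp add: power2_eq_square sum_product h_def mult_ac)
  moreover have "(\<Sum>i\<in>I. f t i * f t' i)^2 = (\<Sum>i\<in>I. \<Sum>j\<in>I. h i j t t')" for t t'
    by (simp add: power2_eq_square sum_product h_def)
  moreover have "(\<Sum>i\<in>I. \<Sum>j\<in>I. \<Sum>t\<in>T. \<Sum>t'\<in>T. h i j t t') =
      (\<Sum>t\<in>T. \<Sum>t'\<in>T. \<Sum>i\<in>I. \<Sum>j\<in>I. h i j t t')"
    by (subst (2) sum.swap, subst sum.swap, subst (3) sum.swap, subst (2) sum.swap) (rule refl)
  ultimately show ?thesis
    by simp
qed

lemma sum_squared_gram_ge:
  fixes f :: "'a \<Rightarrow> 'b \<Rightarrow> real"
  assumes I: "finite I" and diag: "\<And>i. i \<in> I \<Longrightarrow> (\<Sum>t\<in>T. (f t i)^2) = M"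
  shows "real (card I) * M^2 \<le> (\<Sum>t\<in>T. \<Sum>t'\<in>T. (\<Sum>i\<in>I. f t i * f t' i)^2)"
proof -
  have "(\<Sum>t\<in>T. f t i * f t i) = M" if "i \<in> I" for i
    using diag[OF that] by (simp add: power2_eq_square)
  then have "real (card I) * M^2 = (\<Sum>i\<in>I. (\<Sum>t\<in>T. f t i * f t i)^2)"
    by simp
  also have "\<dots> \<le> (\<Sum>i\<in>I. \<Sum>j\<in>I. (\<Sum>t\<in>T. f t i * f t j)^2)"
  proof (rule sum_mono)
    fix i assume "i \<in> I"
    then show "(\<Sum>t\<in>T. f t i * f t i)^2 \<le> (\<Sum>j\<in>I. (\<Sum>t\<in>T. f t i * f t j)^2)"
      using member_le_sum[of i I "\<lambda>j. (\<Sum>t\<in>T. f t i * f t j)^2"] I by simp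
  qed
  also have "\<dots> = (\<Sum>t\<in>T. \<Sum>t'\<in>T. (\<Sum>i\<in>I. f t i * f t' i)^2)"
    by (rule sum_squared_gram_swap)
  finally show ?thesis .
qed

locale psca_family =
  fixes n k lam N :: nat and y :: "nat \<Rightarrow> nat list"
  assumes perm: "\<And>i. i < N \<Longrightarrow> y i \<in> perms n"
    and covers: "\<And>\<kappa>. \<kappa> \<in> kseqs n k \<Longrightarrow> card {i. i < N \<and> subseq \<kappa> (y i)} = lam"
begin

lemma distinct_perm: "i < N \<Longrightarrow> distinct (y i)"
  and set_perm: "i < N \<Longrightarrow> set (y i) = {1..n}"
  using perm by (auto simp: perms_def)

lemma pair_sign_swap_perm:
  "i < N \<Longrightarrow> u \<noteq> v \<Longrightarrow> u \<in> {1..n} \<Longrightarrow> v \<in> {1..n} \<Longrightarrow>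
    pair_sign (y i) v u = - pair_sign (y i) u v"
  using pair_sign_swap[of "y i" u v] distinct_perm set_perm by simp

lemma card_restriction_eq:
  assumes A: "A \<subseteq> {1..n}" "card A = k" and \<kappa>: "\<kappa> \<in> permutations_of_set A"
  shows "card {i. i < N \<and> filter (\<lambda>v. v \<in> A) (y i) = \<kappa>} = lam"
proof -
  have \<kappa>_set: "distinct \<kappa>" "set \<kappa> = A"
    using \<kappa> by (auto simp: permutations_of_set_def)
  have "subseq \<kappa> (y i) \<longleftrightarrow> filter (\<lambda>v. v \<in> A) (y i) = \<kappa>" if "i < N" for i
  proof -
    have "distinct (y i)" "set \<kappa> \<subseteq> set (y i)"
      using perm[OF that] \<kappa>_set A by (auto simp: perms_def)
    then show ?thesis
      using subseq_iff_filter_eq[of "y i" \<kappa>] \<kappa>_set by simp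
  qed
  then have "{i. i < N \<and> filter (\<lambda>v. v \<in> A) (y i) = \<kappa>} = {i. i < N \<and> subseq \<kappa> (y i)}"
    by blast
  moreover have "\<kappa> \<in> kseqs n k"
    using \<kappa>_set A distinct_card[of \<kappa>] by (simp add: kseqs_def)
  ultimately show ?thesis
    using covers by simp
qed

lemma sum_restriction:
  assumes A: "A \<subseteq> {1..n}" "card A = k"
  shows "(\<Sum>i<N. F (filter (\<lambda>v. v \<in> A) (y i))) = real lam * sum F (permutations_of_set A)"
proof -
  let ?P = "permutations_of_set A" and ?r = "\<lambda>i. filter (\<lambda>v. v \<in> A) (y i)"
  have r: "?r i \<in> ?P" if "i < N" for i
    using perm[OF that] A by (auto simp: perms_def permutations_of_set_def)
  have "(\<Sum>i<N. F (?r i)) = (\<Sum>i<N. \<Sum>\<kappa>\<in>?P. if ?r i = \<kappa> then F \<kappa> else 0)"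
    by (rule sum.cong) (simp_all add: r)
  also have "\<dots> = (\<Sum>\<kappa>\<in>?P. \<Sum>i<N. if ?r i = \<kappa> then F \<kappa> else 0)"
    by (rule sum.swap)
  also have "\<dots> = (\<Sum>\<kappa>\<in>?P. real lam * F \<kappa>)"
  proof (rule sum.cong)
    fix \<kappa> assume "\<kappa> \<in> ?P"
    have "(\<Sum>i<N. if ?r i = \<kappa> then F \<kappa> else 0) = real (card {i. i < N \<and> ?r i = \<kappa>}) * F \<kappa>"
      by (simp add: sum.If_cases lessThan_def Collect_conj_eq Int_commute)
    then show "(\<Sum>i<N. if ?r i = \<kappa> then F \<kappa> else 0) = real lam * F \<kappa>"
      using card_restriction_eq[OF A \<open>\<kappa> \<in> ?P\<close>] by simp
  qed simp
  finally show ?thesis by (simp add: sum_distrib_left)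
qed

end

locale psca4 = psca_family n 4 lam N y for n lam N y +
  assumes n_ge_4: "4 \<le> n"
begin

lemma family_size: "real N = 24 * real lam"
proof -
  have "(\<Sum>i<N. (\<lambda>_. 1::real) (filter (\<lambda>v. v \<in> {1,2,3,4}) (y i))) =
      real lam * (\<Sum>_\<in>permutations_of_set {1,2,3,4::nat}. 1)"
    by (rule sum_restriction) (use n_ge_4 in auto)
  then show ?thesis by (simp add: sum_permutations_of_set_4)
qed

lemma sum_pair_sign_mult_disjoint:
  assumes d: "distinct [a, b, c, d]" and A: "{a, b, c, d} \<subseteq> {1..n}"
  shows "(\<Sum>i<N. pair_sign (y i) a b * pair_sign (y i) c d) = 0"
proof -
  have "(\<Sum>i<N. pair_sign (y i) a b * pair_sign (y i) c d) =
      real lam * (\<Sum>\<kappa>\<in>permutations_of_set {a, b, c, d}. pair_sign \<kappa> a b * pair_sign \<kappa> c d)"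
    using sum_restriction[OF A, of "\<lambda>\<kappa>. pair_sign \<kappa> a b * pair_sign \<kappa> c d"] d
    by (simp add: pair_sign_filter)
  also have "\<dots> = 0"
    by (simp only: sum_permutations_of_set_4[OF d]) (use d in \<open>simp add: pair_sign_def\<close>)
  finally show ?thesis .
qed

lemma sum_cyclic_sign_mult_pair_sign_out:
  assumes d: "distinct [a, b, c, d]" and A: "{a, b, c, d} \<subseteq> {1..n}"
  shows "(\<Sum>i<N. cyclic_sign (y i) a b c * pair_sign (y i) a d) = 0"
proof -
  have "(\<Sum>i<N. cyclic_sign (y i) a b c * pair_sign (y i) a d) =
      real lam * (\<Sum>\<kappa>\<in>permutations_of_set {a, b, c, d}. cyclic_sign \<kappa> a b c * pair_sign \<kappa> a d)"
    using sum_restriction[OF A, of "\<lambda>\<kappa>. cyclic_sign \<kappa> a b c * pair_sign \<kappa> a d"] d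
    by (simp add: pair_sign_filter cyclic_sign_filter)
  also have "\<dots> = 0"
    by (simp only: sum_permutations_of_set_4[OF d])
      (use d in \<open>simp add: cyclic_sign_def pair_sign_def\<close>)
  finally show ?thesis .
qed

lemma sum_cyclic_sign_mult_two_common:
  assumes d: "distinct [a, b, c, d]" and A: "{a, b, c, d} \<subseteq> {1..n}"
  shows "(\<Sum>i<N. cyclic_sign (y i) a b c * cyclic_sign (y i) a b d) = 8 * real lam"
proof -
  have "(\<Sum>i<N. cyclic_sign (y i) a b c * cyclic_sign (y i) a b d) =
      real lam * (\<Sum>\<kappa>\<in>permutations_of_set {a, b, c, d}. cyclic_sign \<kappa> a b c * cyclic_sign \<kappa> a b d)"
    using sum_restriction[OF A, of "\<lambda>\<kappa>. cyclic_sign \<kappa> a b c * cyclic_sign \<kappa> a b d"] d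
    by (simp add: cyclic_sign_filter)
  also have "\<dots> = 8 * real lam"
    by (simp only: sum_permutations_of_set_4[OF d])
      (use d in \<open>simp add: cyclic_sign_def pair_sign_def\<close>)
  finally show ?thesis .
qed

lemma sum_cyclic_sign_mult_pair_sign_vertex:
  assumes d: "distinct [a, b, c]" and A: "{a, b, c} \<subseteq> {1..n}"
    and p: "p \<in> {a, b, c}" and q: "q \<notin> {a, b, c}" "q \<in> {1..n}"
  shows "(\<Sum>i<N. cyclic_sign (y i) a b c * pair_sign (y i) p q) = 0"
proof -
  from p consider "p = a" | "p = b" | "p = c" by blast
  then show ?thesis
  proof cases
    case 1
    then show ?thesis using sum_cyclic_sign_mult_pair_sign_out[of a b c q] d A q by simp
  next
    case 2
    then show ?thesis
      using sum_cyclic_sign_mult_pair_sign_out[of b c a q] d A q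
      by (simp add: cyclic_sign_rotate[of _ a b c])
  next
    case 3
    then show ?thesis
      using sum_cyclic_sign_mult_pair_sign_out[of c a b q] d A q
      by (simp add: cyclic_sign_rotate[of _ c a b, symmetric])
  qed
qed

lemma sum_cyclic_sign_mult_pair_sign:
  assumes d: "distinct [a, b, c]" and A: "{a, b, c} \<subseteq> {1..n}"
    and pq: "p \<noteq> q" "p \<in> {1..n}" "q \<in> {1..n}" and out: "\<not> {p, q} \<subseteq> {a, b, c}"
  shows "(\<Sum>i<N. cyclic_sign (y i) a b c * pair_sign (y i) p q) = 0"
proof -
  consider "p \<in> {a, b, c}" | "p \<notin> {a, b, c}" "q \<in> {a, b, c}" | "p \<notin> {a, b, c}" "q \<notin> {a, b, c}"
    by blast
  then show ?thesis
  proof cases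
    case 1
    then show ?thesis using sum_cyclic_sign_mult_pair_sign_vertex[OF d A] pq out by blast
  next
    case 2
    have "(\<Sum>i<N. cyclic_sign (y i) a b c * pair_sign (y i) p q) =
        - (\<Sum>i<N. cyclic_sign (y i) a b c * pair_sign (y i) q p)"
      unfolding sum_negf[symmetric]
      by (intro sum.cong refl)
        (simp add: pair_sign_swap_perm[of _ q p, OF _ not_sym[OF pq(1)] pq(3,2)])
    then show ?thesis using sum_cyclic_sign_mult_pair_sign_vertex[OF d A 2(2,1) pq(2)] by simp
  next
    case 3
    have "(\<Sum>i<N. cyclic_sign (y i) a b c * pair_sign (y i) p q) =
      (\<Sum>i<N. pair_sign (y i) a b * pair_sign (y i) p q) +
      (\<Sum>i<N. pair_sign (y i) b c * pair_sign (y i) p q) +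
      (\<Sum>i<N. pair_sign (y i) c a * pair_sign (y i) p q)"
      by (simp add: cyclic_sign_def sum.distrib algebra_simps)
    then show ?thesis
      using sum_pair_sign_mult_disjoint[of a b p q] sum_pair_sign_mult_disjoint[of b c p q]
        sum_pair_sign_mult_disjoint[of c a p q] d A pq 3 by auto
  qed
qed

definition correlation :: "nat list \<Rightarrow> nat list \<Rightarrow> real" where
  "correlation t t' =
    (\<Sum>i<N. cyclic_sign (y i) (t!0) (t!1) (t!2) * cyclic_sign (y i) (t'!0) (t'!1) (t'!2))"

lemma correlation_same_set:
  assumes "distinct [p, q, r]" "{p, q, r} = {a, b, c}" "{a, b, c} \<subseteq> {1..n}"
  shows "(correlation [a, b, c] [p, q, r])^2 = (real N)^2"
proof -
  obtain \<sigma> :: real where \<sigma>: "\<sigma>^2 = 1"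
    "\<And>x. distinct x \<Longrightarrow> {a, b, c} \<subseteq> set x \<Longrightarrow> cyclic_sign x p q r = \<sigma> * cyclic_sign x a b c"
    using cyclic_sign_same_set[OF assms(1,2)] by blast
  have abc: "distinct [a, b, c]"
    using distinct_triple_if_same_set[OF assms(1,2)] .
  have "correlation [a, b, c] [p, q, r] = (\<Sum>i<N. \<sigma>)"
    unfolding correlation_def
    by (rule sum.cong) (use \<sigma>(2) cyclic_sign_square[OF _ abc] distinct_perm set_perm assms(3)
        in \<open>auto simp: power2_eq_square\<close>)
  then show ?thesis using \<sigma>(1) by (simp add: power_mult_distrib)
qed

lemma correlation_two_common:
  assumes abc: "distinct [a, b, c]" "{a, b, c} \<subseteq> {1..n}"
    and pqr: "distinct [p, q, r]" "{p, q, r} \<subseteq> {1..n}"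
    and two: "card ({a, b, c} \<inter> {p, q, r}) = 2"
  shows "(correlation [a, b, c] [p, q, r])^2 = 64 * (real lam)^2"
proof -
  obtain u v where uv: "{a, b, c} \<inter> {p, q, r} = {u, v}" "u \<noteq> v"
    using two by (meson card_2_iff)
  have "{u, v} \<subseteq> {a, b, c}" "{u, v} \<subseteq> {p, q, r}"
    using uv(1) by blast+
  then have "card ({a, b, c} - {u, v}) = 1" "card ({p, q, r} - {u, v}) = 1"
    using abc(1) pqr(1) uv(2) by (simp_all add: card_Diff_subset)
  then obtain w z where w: "{a, b, c} - {u, v} = {w}" and z: "{p, q, r} - {u, v} = {z}"
    by (meson card_1_singletonE)
  have abc_eq: "{a, b, c} = {u, v, w}" and pqr_eq: "{p, q, r} = {u, v, z}"
    using uv w z by blast+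
  have uvwz: "distinct [u, v, w, z]"
    using uv w z by auto
  have sub: "{u, v, w, z} \<subseteq> {1..n}"
    using abc(2) pqr(2) abc_eq pqr_eq by blast
  obtain \<sigma> :: real where \<sigma>: "\<sigma>^2 = 1"
    "\<And>x. distinct x \<Longrightarrow> {u, v, w} \<subseteq> set x \<Longrightarrow> cyclic_sign x a b c = \<sigma> * cyclic_sign x u v w"
    using cyclic_sign_same_set[OF abc(1) abc_eq] by blast
  obtain \<tau> :: real where \<tau>: "\<tau>^2 = 1"
    "\<And>x. distinct x \<Longrightarrow> {u, v, z} \<subseteq> set x \<Longrightarrow> cyclic_sign x p q r = \<tau> * cyclic_sign x u v z"
    using cyclic_sign_same_set[OF pqr(1) pqr_eq] by blast
  have "correlation [a, b, c] [p, q, r] =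
      \<sigma> * \<tau> * (\<Sum>i<N. cyclic_sign (y i) u v w * cyclic_sign (y i) u v z)"
    unfolding correlation_def sum_distrib_left
    by (intro sum.cong refl) (use \<sigma>(2) \<tau>(2) distinct_perm set_perm sub in simp)
  also have "\<dots> = \<sigma> * \<tau> * (8 * real lam)"
    using sum_cyclic_sign_mult_two_common[OF uvwz sub] by simp
  finally show ?thesis
    using \<sigma>(1) \<tau>(1) by (simp add: power_mult_distrib)
qed

lemma correlation_one_common:
  assumes abc: "distinct [a, b, c]" "{a, b, c} \<subseteq> {1..n}"
    and pqr: "distinct [p, q, r]" "{p, q, r} \<subseteq> {1..n}"
    and le1: "card ({a, b, c} \<inter> {p, q, r}) \<le> 1"
  shows "correlation [a, b, c] [p, q, r] = 0"
proof -
  have out: "\<not> {u, v} \<subseteq> {a, b, c}" if "{u, v} \<subseteq> {p, q, r}" "u \<noteq> v" for u v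
  proof
    assume "{u, v} \<subseteq> {a, b, c}"
    then have "card {u, v} \<le> card ({a, b, c} \<inter> {p, q, r})"
      using that by (intro card_mono) auto
    then show False using le1 that(2) by simp
  qed
  have "correlation [a, b, c] [p, q, r] =
      (\<Sum>i<N. cyclic_sign (y i) a b c * pair_sign (y i) p q) +
      (\<Sum>i<N. cyclic_sign (y i) a b c * pair_sign (y i) q r) +
      (\<Sum>i<N. cyclic_sign (y i) a b c * pair_sign (y i) r p)"
    by (simp add: correlation_def cyclic_sign_def[of _ p q r] sum.distrib algebra_simps)
  also have "\<dots> = 0"
    using sum_cyclic_sign_mult_pair_sign[OF abc, of p q] sum_cyclic_sign_mult_pair_sign[OF abc, of q r]
      sum_cyclic_sign_mult_pair_sign[OF abc, of r p] out pqr by auto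
  finally show ?thesis .
qed

lemma cyclic_sign_square_kseqs:
  "t \<in> kseqs n 3 \<Longrightarrow> i < N \<Longrightarrow> (cyclic_sign (y i) (t!0) (t!1) (t!2))^2 = 1"
  by (elim kseqs_3E) (simp add: cyclic_sign_square distinct_perm set_perm)

lemma correlation_sq_le:
  assumes t: "t \<in> kseqs n 3" and t': "t' \<in> kseqs n 3"
  shows "(correlation t t')^2 \<le> (if set t' = set t then (real N)^2 else 0) +
    (if card (set t \<inter> set t') = 2 then 64 * (real lam)^2 else 0)"
proof -
  obtain a b c where abc: "t = [a, b, c]" "distinct [a, b, c]" "{a, b, c} \<subseteq> {1..n}"
    using kseqs_3E[OF t] by blast
  obtain p q r where pqr: "t' = [p, q, r]" "distinct [p, q, r]" "{p, q, r} \<subseteq> {1..n}"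
    using kseqs_3E[OF t'] by blast
  have "card ({a, b, c} \<inter> {p, q, r}) \<le> 3"
    using card_mono[of "{a, b, c}" "{a, b, c} \<inter> {p, q, r}"] abc(2) by simp
  then consider "card ({a, b, c} \<inter> {p, q, r}) = 3" | "card ({a, b, c} \<inter> {p, q, r}) = 2"
    | "card ({a, b, c} \<inter> {p, q, r}) \<le> 1"
    by linarith
  then show ?thesis
  proof cases
    case 1
    have "{a, b, c} \<inter> {p, q, r} = {a, b, c}"
      by (rule card_subset_eq) (use 1 abc(2) in auto)
    moreover have "{a, b, c} \<inter> {p, q, r} = {p, q, r}"
      by (rule card_subset_eq) (use 1 pqr(2) in auto)
    ultimately have "{p, q, r} = {a, b, c}" by simp
    then show ?thesis
      using correlation_same_set[OF pqr(2) _ abc(3)] abc pqr by simp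
  next
    case 2
    then have "set t' \<noteq> set t"
      using abc pqr by auto
    then show ?thesis
      using correlation_two_common[OF abc(2,3) pqr(2,3) 2] abc pqr 2 by simp
  next
    case 3
    then show ?thesis
      using correlation_one_common[OF abc(2,3) pqr(2,3)] abc pqr by simp
  qed
qed

lemma sum_correlation_sq_le:
  assumes t: "t \<in> kseqs n 3"
  shows "(\<Sum>t'\<in>kseqs n 3. (correlation t t')^2) \<le>
    6 * (real N)^2 + 18 * (real n - 3) * (64 * (real lam)^2)"
proof -
  let ?same = "{t' \<in> kseqs n 3. set t' = set t}"
    and ?two = "{t' \<in> kseqs n 3. card (set t \<inter> set t') = 2}"
  have "(\<Sum>t'\<in>kseqs n 3. (correlation t t')^2) \<le>
      (\<Sum>t'\<in>kseqs n 3. (if set t' = set t then (real N)^2 else 0) +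
        (if card (set t \<inter> set t') = 2 then 64 * (real lam)^2 else 0))"
    by (intro sum_mono correlation_sq_le t)
  also have "\<dots> = real (card ?same) * (real N)^2 + real (card ?two) * (64 * (real lam)^2)"
    by (simp add: sum.distrib sum.If_cases finite_kseqs Int_def conj_commute)
  also have "\<dots> \<le> 6 * (real N)^2 + 18 * (real n - 3) * (64 * (real lam)^2)"
  proof (intro add_mono mult_right_mono)
    show "real (card ?same) \<le> 6"
      using card_kseqs_same_set[OF t] by simp
    show "real (card ?two) \<le> 18 * (real n - 3)"
      using card_kseqs_two_common[OF t] n_ge_4 by (simp add: of_nat_diff flip: of_nat_le_iff)
  qed simp_all
  finally show ?thesis .
qed

lemma multiplicity_lower_bound:
  assumes "0 < lam"
  shows "(real n - 1) * (real n - 2) \<le> 48 * real lam"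
proof -
  define M where "M = real n * (real n - 1) * (real n - 2)"
  have card_T: "real (card (kseqs n 3)) = M"
    using card_kseqs_3[of n] n_ge_4 by (simp add: M_def of_nat_diff)
  have "M > 0"
    using n_ge_4 by (simp add: M_def)
  have diag: "(\<Sum>t\<in>kseqs n 3. (cyclic_sign (y i) (t!0) (t!1) (t!2))^2) = M"
    if "i \<in> {..<N}" for i
    using cyclic_sign_square_kseqs that card_T by simp
  have "real N * M^2 \<le> (\<Sum>t\<in>kseqs n 3. \<Sum>t'\<in>kseqs n 3. (correlation t t')^2)"
    using sum_squared_gram_ge[OF finite_lessThan diag] by (simp add: correlation_def)
  also have "\<dots> \<le> (\<Sum>t\<in>kseqs n 3. 6 * (real N)^2 + 18 * (real n - 3) * (64 * (real lam)^2))"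
    by (intro sum_mono sum_correlation_sq_le)
  also have "\<dots> = M * (6 * (real N)^2 + 18 * (real n - 3) * (64 * (real lam)^2))"
    using card_T by simp
  finally have "real N * M \<le> 6 * (real N)^2 + 18 * (real n - 3) * (64 * (real lam)^2)"
    using \<open>M > 0\<close> by (simp add: power2_eq_square)
  then have "24 * real lam * M \<le> 24 * real lam * (48 * real n * real lam)"
    by (simp add: family_size power2_eq_square algebra_simps)
  then have "M \<le> real n * (48 * real lam)"
    using assms by (simp add: mult_ac)
  then have "real n * ((real n - 1) * (real n - 2)) \<le> real n * (48 * real lam)"
    by (simp add: M_def mult.assoc)
  then show ?thesis
    using n_ge_4 by simp
qed

end

lemma map_map_of_zip:
  "distinct xs \<Longrightarrow> length xs = length ys \<Longrightarrow> map (\<lambda>v. the (map_of (zip xs ys) v)) xs = ys"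
proof (induction xs arbitrary: ys)
  case (Cons x xs)
  then obtain z zs where ys: "ys = z # zs"
    by (cases ys) auto
  have "map (\<lambda>v. the (map_of (zip (x # xs) ys) v)) xs = map (\<lambda>v. the (map_of (zip xs zs) v)) xs"
    using Cons.prems by (intro map_cong) (auto simp: ys)
  with Cons show ?case
    by (simp add: ys)
qed simp

definition extend_to_perm :: "nat \<Rightarrow> nat list \<Rightarrow> nat list" where
  "extend_to_perm n \<kappa> = \<kappa> @ filter (\<lambda>v. v \<notin> set \<kappa>) [1..<n + 1]"

lemma extend_to_perm_in_perms: "\<kappa> \<in> kseqs n k \<Longrightarrow> extend_to_perm n \<kappa> \<in> perms n"
  by (auto simp: extend_to_perm_def kseqs_def perms_def)

lemma finite_perms: "finite (perms n)"
proof -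
  have "perms n = permutations_of_set {1..n}"
    by (auto simp: perms_def permutations_of_set_def)
  then show ?thesis
    by simp
qed

lemma card_perms_containing_mono:
  assumes \<kappa>: "\<kappa> \<in> kseqs n k" and \<kappa>': "\<kappa>' \<in> kseqs n k"
  shows "card {x \<in> perms n. subseq \<kappa> x} \<le> card {x \<in> perms n. subseq \<kappa>' x}"
proof -
  define p p' where "p = extend_to_perm n \<kappa>" and "p' = extend_to_perm n \<kappa>'"
  have p: "distinct p" "set p = {1..n}" and p': "distinct p'" "set p' = {1..n}"
    using extend_to_perm_in_perms \<kappa> \<kappa>' by (auto simp: p_def p'_def perms_def)
  then have "length p = length p'"
    by (metis distinct_card)
  define \<sigma> where "\<sigma> v = the (map_of (zip p p') v)" for v
  have map_p: "map \<sigma> p = p'"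
    unfolding \<sigma>_def using map_map_of_zip p(1) \<open>length p = length p'\<close> .
  have inj: "inj_on \<sigma> {1..n}"
    using p p' distinct_map[of \<sigma> p] by (simp add: map_p)
  have img: "\<sigma> ` {1..n} = {1..n}"
    using p(2) p'(2) by (metis list.set_map map_p)
  have "map \<sigma> \<kappa> = \<kappa>'"
  proof -
    have "take k p = \<kappa>" "take k p' = \<kappa>'"
      using \<kappa> \<kappa>' by (auto simp: p_def p'_def extend_to_perm_def kseqs_def)
    then show ?thesis
      using map_p by (metis take_map)
  qed
  have "inj_on (map \<sigma>) {x \<in> perms n. subseq \<kappa> x}"
  proof (rule inj_onI)
    fix x x' assume "x \<in> {x \<in> perms n. subseq \<kappa> x}" "x' \<in> {x \<in> perms n. subseq \<kappa> x}"
      and "map \<sigma> x = map \<sigma> x'"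
    then show "x = x'"
      using inj_on_map_eq_map[of \<sigma> x x'] inj by (simp add: perms_def)
  qed
  moreover have "map \<sigma> ` {x \<in> perms n. subseq \<kappa> x} \<subseteq> {x \<in> perms n. subseq \<kappa>' x}"
  proof
    fix z assume "z \<in> map \<sigma> ` {x \<in> perms n. subseq \<kappa> x}"
    then obtain x where x: "x \<in> perms n" "subseq \<kappa> x" "z = map \<sigma> x"
      by blast
    have "distinct z" "set z = {1..n}"
      using x inj img by (auto simp: perms_def distinct_map)
    moreover have "subseq \<kappa>' z"
      using subseq_map[OF x(2), of \<sigma>] \<open>map \<sigma> \<kappa> = \<kappa>'\<close> x(3) by simp
    ultimately show "z \<in> {x \<in> perms n. subseq \<kappa>' x}"
      by (simp add: perms_def)
  qed
  ultimately show ?thesis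
    by (intro card_inj_on_le) (auto simp: finite_perms)
qed

lemma all_perms_is_PSCA:
  assumes "k \<le> n"
  shows "\<exists>lam > 0. is_PSCA n k lam (mset_set (perms n))"
proof -
  define \<kappa>\<^sub>0 where "\<kappa>\<^sub>0 = [1..<k + 1]"
  have \<kappa>\<^sub>0: "\<kappa>\<^sub>0 \<in> kseqs n k"
    using assms by (auto simp: \<kappa>\<^sub>0_def kseqs_def)
  define lam where "lam = card {x \<in> perms n. subseq \<kappa>\<^sub>0 x}"
  have "subseq \<kappa>\<^sub>0 (extend_to_perm n \<kappa>\<^sub>0)"
    by (intro prefix_imp_subseq) (simp add: extend_to_perm_def)
  then have "extend_to_perm n \<kappa>\<^sub>0 \<in> {x \<in> perms n. subseq \<kappa>\<^sub>0 x}"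
    using extend_to_perm_in_perms[OF \<kappa>\<^sub>0] by simp
  then have "0 < lam"
    unfolding lam_def card_gt_0_iff using finite_perms by auto
  moreover have "is_PSCA n k lam (mset_set (perms n))"
    unfolding is_PSCA_def
  proof (intro conjI ballI)
    fix \<kappa> assume "\<kappa> \<in> kseqs n k"
    then show "size (filter_mset (\<lambda>\<pi>. subseq \<kappa> \<pi>) (mset_set (perms n))) = lam"
      using card_perms_containing_mono[OF _ \<kappa>\<^sub>0] card_perms_containing_mono[OF \<kappa>\<^sub>0]
      by (simp add: finite_perms lam_def le_antisym)
  qed (simp add: finite_perms)
  ultimately show ?thesis
    by blast
qed

lemma PSCA_4_multiplicity_ge:
  assumes "4 \<le> n" "0 < lam" "is_PSCA n 4 lam X"
  shows "(real n - 1) * (real n - 2) \<le> 48 * real lam"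
proof -
  obtain xs where xs: "mset xs = X"
    using ex_mset by blast
  interpret psca4 n lam "length xs" "(!) xs"
  proof
    fix i assume "i < length xs"
    then show "xs ! i \<in> perms n"
      using assms(3) xs by (auto simp: is_PSCA_def)
  next
    fix \<kappa> assume "\<kappa> \<in> kseqs n 4"
    have "card {i. i < length xs \<and> subseq \<kappa> (xs ! i)} = size (filter_mset (subseq \<kappa>) X)"
      by (simp add: length_filter_conv_card flip: xs mset_filter)
    then show "card {i. i < length xs \<and> subseq \<kappa> (xs ! i)} = lam"
      using assms(3) \<open>\<kappa> \<in> kseqs n 4\<close> by (simp add: is_PSCA_def)
  qed (fact assms(1))
  show ?thesis
    by (rule multiplicity_lower_bound[OF assms(2)])
qed

theorem mainTheorem10:
  fixes n :: nat
  assumes "4 \<le> n"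
  shows "real (g n 4) \<ge> real n * (real n - 3) / 48"
proof -
  have "0 < g n 4 \<and> (\<exists>X. is_PSCA n 4 (g n 4) X)"
    unfolding g_def by (rule LeastI_ex) (use all_perms_is_PSCA[of 4 n] assms in blast)
  then have "(real n - 1) * (real n - 2) \<le> 48 * real (g n 4)"
    using PSCA_4_multiplicity_ge assms by blast
  moreover have "real n * (real n - 3) \<le> (real n - 1) * (real n - 2)"
    by (simp add: algebra_simps)
  ultimately show ?thesis
    by simp
qed

end
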